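(* For all $n\ge1$ and $j\in\{1,2,3\}$, $$\|\varphi^{(j)}_n\|^2=\frac{\mu_+^{n+1}-\mu_-^{n+1}}{\mu_+-\mu_-},$$ where $\mu_\pm=(1\pm\sqrt{1+4|\lambda|^2})/2$. Consequently, with $\mu=\mu_-/\mu_+\in(-1,0]$ and $\alpha_n=\|\varphi_{n-1}\|^2/\|\varphi_n\|^2$ (convention $\varphi_0=1$), $$\alpha_n=\frac1{\mu_+}\,\frac{1-\mu^n}{1-\mu^{n+1}}.$$
   Context: $\lambda\in\mathbb C$. For $L\in\mathbb N$, $\varphi_L\in\bigotimes_{x=1}^{3L}\mathbb C^2$ is $\varphi_L=\sum_{\mathbf D}\lambda^{\#(\mathbf D)}|\boldsymbol\sigma(\mathbf D)\rangle$, summing over all tilings $\mathbf D$ of $[1,3L]$ obtained from $L$ consecutive monomers (length 3, content $100$) by replacing some disjoint pairs of consecutive monomers by a dimer (length 6, content $011000$); $\#(\mathbf D)$ is the number of dimers, $\boldsymbol\sigma(\mathbf D)$ the concatenated 0/1 content, and $|\boldsymbol\sigma\rangle$ the orthonormal product basis. For $j\in\{1,2\}$, $\varphi^{(j)}_L$ on $[1,3(L-1)+j]$ is defined likewise from $L-1$ monomers followed by a right $j$-monomer (content $1$, resp. $10$), where the last monomer and the right $j$-monomer may also be replaced by a truncated $j$-dimer (content $0110$, resp. $01100$), counted in $\#(\mathbf D)$. $\varphi^{(3)}_L=\varphi_L$. *)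

theory Defs
  imports Complex_Main
begin

text \<open>Tiles: monomer (content 100), dimer (content 011000),
  right j-monomer (content 1, resp. 10) and truncated j-dimer (content 0110, resp. 01100).
  Spin content is encoded as a bool list (True = 1, False = 0).\<close>

datatype tile = Mono | Dimer | RMono nat | TDimer nat

fun tile_content :: "tile \<Rightarrow> bool list" where
  "tile_content Mono = [True, False, False]"
| "tile_content Dimer = [False, True, True, False, False, False]"
| "tile_content (RMono j) = (if j = 1 then [True] else [True, False])"
| "tile_content (TDimer j) = (if j = 1 then [False, True, True, False]
                              else [False, True, True, False, False])"

fun tile_weight :: "tile \<Rightarrow> nat" where
  "tile_weight Mono = 1"
| "tile_weight Dimer = 2"
| "tile_weight (RMono j) = 0"
| "tile_weight (TDimer j) = 0"

fun is_dimer :: "tile \<Rightarrow> bool" where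
  "is_dimer Dimer = True"
| "is_dimer (TDimer j) = True"
| "is_dimer _ = False"

text \<open>Tilings of [1,3L] obtained from L monomers by replacing some disjoint
  pairs of consecutive monomers by dimers.\<close>
definition tilings :: "nat \<Rightarrow> tile list set" where
  "tilings L = {ts. set ts \<subseteq> {Mono, Dimer} \<and> sum_list (map tile_weight ts) = L}"

definition jtilings :: "nat \<Rightarrow> nat \<Rightarrow> tile list set" where
  "jtilings j L = (if j = 3 then tilings L else
     {ts @ [RMono j] | ts. ts \<in> tilings (L - 1)}
     \<union> {ts @ [TDimer j] | ts. L \<ge> 2 \<and> ts \<in> tilings (L - 2)})"

definition content :: "tile list \<Rightarrow> bool list" where
  "content ts = concat (map tile_content ts)"

definition num_dimers :: "tile list \<Rightarrow> nat" where
  "num_dimers ts = length (filter is_dimer ts)"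

text \<open>Coefficient of the basis vector |sigma> in the vector
  sum over tilings D of lam^#D |sigma(D)> built from a set of tilings.\<close>
definition coeff :: "complex \<Rightarrow> tile list set \<Rightarrow> bool list \<Rightarrow> complex" where
  "coeff lam T \<sigma> = (\<Sum>ts\<in>{ts\<in>T. content ts = \<sigma>}. lam ^ num_dimers ts)"

text \<open>Squared norm w.r.t. the orthonormal product basis.\<close>
definition norm_sq :: "complex \<Rightarrow> tile list set \<Rightarrow> real" where
  "norm_sq lam T = (\<Sum>\<sigma>\<in>content ` T. (cmod (coeff lam T \<sigma>))\<^sup>2)"

definition phi_norm_sq :: "complex \<Rightarrow> nat \<Rightarrow> nat \<Rightarrow> real" where
  "phi_norm_sq lam j L = norm_sq lam (jtilings j L)"

definition mu_plus :: "complex \<Rightarrow> real" where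
  "mu_plus lam = (1 + sqrt (1 + 4 * (cmod lam)\<^sup>2)) / 2"

definition mu_minus :: "complex \<Rightarrow> real" where
  "mu_minus lam = (1 - sqrt (1 + 4 * (cmod lam)\<^sup>2)) / 2"

end

theory Submission
  imports Defs
begin

text \<open>Distinct tilings have distinct spin contents, so the squared norm of the vector built from
  a set of tilings is the dimer generating function \<open>W(L) = \<Sum>\<^sub>D |\<lambda>|^(2 #D)\<close>. Splitting off the
  last tile gives \<open>W(L+2) = W(L+1) + |\<lambda>|\<^sup>2 W(L)\<close> with \<open>W(0) = W(1) = 1\<close>; since a truncated end
  tile carries the same dimer count as the tile it truncates, the boundaries \<open>j = 1, 2\<close> give the
  same sums for \<open>L \<ge> 1\<close>. The characteristic roots of the recurrence are \<open>\<mu>\<^sub>+\<close> and \<open>\<mu>\<^sub>-\<close>, and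
  Binet's formula gives the closed form.\<close>

lemma content_simps [simp]:
  "content [] = []"
  "content (t # ts) = tile_content t @ content ts"
  "content (xs @ ys) = content xs @ content ys"
  by (simp_all add: content_def)

lemma num_dimers_simps [simp]:
  "num_dimers [] = 0"
  "num_dimers (xs @ [t]) = num_dimers xs + (if is_dimer t then 1 else 0)"
  by (simp_all add: num_dimers_def)

lemma inj_on_content_plain: "inj_on content {ts. set ts \<subseteq> {Mono, Dimer}}"
proof (rule inj_onI, simp)
  fix xs ys
  assume "set xs \<subseteq> {Mono, Dimer}" "set ys \<subseteq> {Mono, Dimer}" "content xs = content ys"
  then show "xs = ys"
  proof (induction xs arbitrary: ys)
    case Nil
    then show ?case by (cases ys) auto
  next
    case (Cons x xs)
    then show ?case by (cases ys) auto
  qed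
qed

text \<open>Read backwards, the contents \<open>1\<close> and \<open>0110\<close> (resp. \<open>10\<close> and \<open>01100\<close>) differ already in
  their last (resp. second to last) letter.\<close>
lemma end_tile_content_eq_imp_eq:
  assumes "e1 \<in> {RMono j, TDimer j}" "e2 \<in> {RMono j, TDimer j}"
    and "xs @ tile_content e1 = ys @ tile_content e2"
  shows "e1 = e2"
proof -
  have "rev (tile_content e1) @ rev xs = rev (tile_content e2) @ rev ys"
    using arg_cong[OF assms(3), of rev] by simp
  then show ?thesis
    using assms(1,2) by (auto split: if_splits)
qed

lemma length_le_tile_weight:
  "set ts \<subseteq> {Mono, Dimer} \<Longrightarrow> length ts \<le> sum_list (map tile_weight ts)"
  by (induction ts) auto

lemma tilings_0: "tilings 0 = {[]}"
proof -
  have "ts = []" if "ts \<in> tilings 0" for ts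
    using that by (cases ts) (auto simp: tilings_def)
  then show ?thesis
    by (auto simp: tilings_def)
qed

lemma tilings_1: "tilings (Suc 0) = {[Mono]}"
proof -
  have "ts = [Mono]" if "set ts \<subseteq> {Mono, Dimer}" "sum_list (map tile_weight ts) = 1" for ts
    using that length_le_tile_weight[OF that(1)] by (cases ts) auto
  then show ?thesis
    by (auto simp: tilings_def)
qed

lemma tilings_Suc_Suc:
  "tilings (Suc (Suc L)) = (\<lambda>ts. ts @ [Mono]) ` tilings (Suc L) \<union> (\<lambda>ts. ts @ [Dimer]) ` tilings L"
proof (intro equalityI subsetI)
  fix ts
  assume "ts \<in> tilings (Suc (Suc L))"
  then show "ts \<in> (\<lambda>ts. ts @ [Mono]) ` tilings (Suc L) \<union> (\<lambda>ts. ts @ [Dimer]) ` tilings L"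
    by (cases ts rule: rev_cases) (auto simp: tilings_def)
qed (auto simp: tilings_def)

lemma finite_tilings: "finite (tilings L)"
proof -
  have "tilings L \<subseteq> {ts. set ts \<subseteq> {Mono, Dimer} \<and> length ts \<le> L}"
    by (fastforce simp: tilings_def dest: length_le_tile_weight)
  then show ?thesis
    by (rule finite_subset) (simp add: finite_lists_length_le)
qed

lemma jtilings_3: "jtilings 3 L = tilings L"
  by (simp add: jtilings_def)

lemma jtilings_1: "j \<in> {1, 2} \<Longrightarrow> jtilings j (Suc 0) = {[RMono j]}"
  by (auto simp: jtilings_def tilings_0)

lemma jtilings_Suc_Suc:
  "j \<in> {1, 2} \<Longrightarrow> jtilings j (Suc (Suc L))
     = (\<lambda>ts. ts @ [RMono j]) ` tilings (Suc L) \<union> (\<lambda>ts. ts @ [TDimer j]) ` tilings L"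
  by (auto simp: jtilings_def)

lemma finite_jtilings: "finite (jtilings j L)"
  by (simp add: jtilings_def finite_tilings setcompr_eq_image)

lemma inj_on_content_end_tiled:
  "inj_on content {ts @ [e] | ts e. set ts \<subseteq> {Mono, Dimer} \<and> e \<in> {RMono j, TDimer j}}"
proof (rule inj_onI)
  fix a b
  assume "a \<in> {ts @ [e] | ts e. set ts \<subseteq> {Mono, Dimer} \<and> e \<in> {RMono j, TDimer j}}"
    and "b \<in> {ts @ [e] | ts e. set ts \<subseteq> {Mono, Dimer} \<and> e \<in> {RMono j, TDimer j}}"
  then obtain xs ys e1 e2 where ab: "a = xs @ [e1]" "b = ys @ [e2]"
    and plain: "set xs \<subseteq> {Mono, Dimer}" "set ys \<subseteq> {Mono, Dimer}"
    and ends: "e1 \<in> {RMono j, TDimer j}" "e2 \<in> {RMono j, TDimer j}"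
    by blast
  assume "content a = content b"
  then have eq: "content xs @ tile_content e1 = content ys @ tile_content e2"
    by (simp add: ab)
  then have "e1 = e2"
    by (rule end_tile_content_eq_imp_eq[OF ends])
  with eq plain have "xs = ys"
    using inj_on_content_plain by (auto dest: inj_onD)
  with \<open>e1 = e2\<close> show "a = b"
    by (simp add: ab)
qed

lemma inj_on_content_jtilings: "inj_on content (jtilings j L)"
proof (cases "j = 3")
  case True
  have "tilings L \<subseteq> {ts. set ts \<subseteq> {Mono, Dimer}}"
    by (auto simp: tilings_def)
  with True show ?thesis
    by (simp add: jtilings_def inj_on_subset[OF inj_on_content_plain])
next
  case False
  have "jtilings j L \<subseteq> {ts @ [e] | ts e. set ts \<subseteq> {Mono, Dimer} \<and> e \<in> {RMono j, TDimer j}}"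
    using False by (auto simp: jtilings_def tilings_def)
  then show ?thesis
    by (rule inj_on_subset[OF inj_on_content_end_tiled])
qed

definition dimer_sum :: "real \<Rightarrow> tile list set \<Rightarrow> real" where
  "dimer_sum x T = (\<Sum>ts\<in>T. x ^ num_dimers ts)"

lemma norm_sq_eq_dimer_sum:
  assumes "finite T" "inj_on content T"
  shows "norm_sq lam T = dimer_sum ((cmod lam)\<^sup>2) T"
proof -
  have coeff: "coeff lam T (content ts) = lam ^ num_dimers ts" if "ts \<in> T" for ts
  proof -
    have "{ts'\<in>T. content ts' = content ts} = {ts}"
      using assms(2) that by (auto dest: inj_onD)
    then show ?thesis
      by (simp add: coeff_def)
  qed
  have "norm_sq lam T = (\<Sum>ts\<in>T. (cmod (coeff lam T (content ts)))\<^sup>2)"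
    unfolding norm_sq_def using assms(2) by (simp add: sum.reindex)
  also have "\<dots> = dimer_sum ((cmod lam)\<^sup>2) T"
    unfolding dimer_sum_def
    by (intro sum.cong) (simp_all add: coeff norm_power mult.commute flip: power_mult power_mult_distrib)
  finally show ?thesis .
qed

lemma dimer_sum_last_tile:
  assumes "\<not> is_dimer a" "is_dimer d"
  shows "dimer_sum x ((\<lambda>ts. ts @ [a]) ` tilings (Suc L) \<union> (\<lambda>ts. ts @ [d]) ` tilings L)
       = dimer_sum x (tilings (Suc L)) + x * dimer_sum x (tilings L)"
proof -
  have "a \<noteq> d"
    using assms by auto
  then have "dimer_sum x ((\<lambda>ts. ts @ [a]) ` tilings (Suc L) \<union> (\<lambda>ts. ts @ [d]) ` tilings L)
      = dimer_sum x ((\<lambda>ts. ts @ [a]) ` tilings (Suc L)) + dimer_sum x ((\<lambda>ts. ts @ [d]) ` tilings L)"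
    unfolding dimer_sum_def by (intro sum.union_disjoint) (auto simp: finite_tilings)
  also have "\<dots> = dimer_sum x (tilings (Suc L)) + x * dimer_sum x (tilings L)"
    using assms by (simp add: dimer_sum_def sum.reindex inj_on_def sum_distrib_left)
  finally show ?thesis .
qed

lemma dimer_sum_tilings_Suc_Suc:
  "dimer_sum x (tilings (Suc (Suc L))) = dimer_sum x (tilings (Suc L)) + x * dimer_sum x (tilings L)"
  unfolding tilings_Suc_Suc by (rule dimer_sum_last_tile) simp_all

lemma dimer_sum_jtilings:
  assumes "j \<in> {1, 2, 3}" "L \<ge> 1"
  shows "dimer_sum x (jtilings j L) = dimer_sum x (tilings L)"
proof (cases "j = 3")
  case True
  then show ?thesis by (simp add: jtilings_3)
next
  case False
  with assms(1) have j: "j \<in> {1, 2}" by auto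
  from assms(2) consider "L = 1" | k where "L = Suc (Suc k)"
    by (metis One_nat_def Suc_le_D not0_implies_Suc not_less_eq_eq)
  then show ?thesis
  proof cases
    case 1
    then show ?thesis by (simp add: jtilings_1[OF j] tilings_1 dimer_sum_def num_dimers_def)
  next
    case 2
    then show ?thesis
      by (simp add: jtilings_Suc_Suc[OF j] dimer_sum_last_tile dimer_sum_tilings_Suc_Suc)
  qed
qed

lemma norm_sq_jtilings:
  assumes "j \<in> {1, 2, 3}" "L \<ge> 1"
  shows "norm_sq lam (jtilings j L) = norm_sq lam (tilings L)"
  using assms inj_on_content_jtilings[of j L] inj_on_content_jtilings[of 3 L]
  by (simp add: norm_sq_eq_dimer_sum finite_jtilings finite_tilings dimer_sum_jtilings jtilings_3)

lemma linear_recurrence_closed_form: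
  fixes f :: "nat \<Rightarrow> 'a::field"
  assumes "p \<noteq> m" "f 0 = 1" "f 1 = p + m"
    and "\<And>n. f (Suc (Suc n)) = (p + m) * f (Suc n) - p * m * f n"
  shows "f n = (p ^ (n + 1) - m ^ (n + 1)) / (p - m)"
proof -
  have "f n * (p - m) = p ^ (n + 1) - m ^ (n + 1) \<and> f (Suc n) * (p - m) = p ^ (n + 2) - m ^ (n + 2)"
  proof (induction n)
    case 0
    then show ?case
      using assms(2,3) by (simp add: algebra_simps power2_eq_square)
  next
    case (Suc n)
    have "f (Suc (Suc n)) * (p - m) = (p + m) * (f (Suc n) * (p - m)) - p * m * (f n * (p - m))"
      by (simp add: assms(4) algebra_simps)
    also have "\<dots> = (p + m) * (p ^ (n + 2) - m ^ (n + 2)) - p * m * (p ^ (n + 1) - m ^ (n + 1))"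
      using Suc.IH by simp
    also have "\<dots> = p ^ (n + 3) - m ^ (n + 3)"
      by (simp add: algebra_simps numeral_3_eq_3)
    finally show ?case
      using Suc by (simp add: numeral_3_eq_3)
  qed
  then show ?thesis
    using assms(1) by (simp add: field_simps)
qed

lemma mu_plus_add_mu_minus: "mu_plus lam + mu_minus lam = 1"
  by (simp add: mu_plus_def mu_minus_def field_simps)

lemma mu_plus_mult_mu_minus: "mu_plus lam * mu_minus lam = - (cmod lam)\<^sup>2"
proof -
  have "(sqrt (1 + 4 * (cmod lam)\<^sup>2))\<^sup>2 = 1 + 4 * (cmod lam)\<^sup>2"
    by simp
  then show ?thesis
    by (simp add: mu_plus_def mu_minus_def field_simps power2_eq_square)
qed

lemma mu_minus_nonpos: "mu_minus lam \<le> 0"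
  by (simp add: mu_minus_def)

lemma abs_mu_minus_less_mu_plus: "\<bar>mu_minus lam\<bar> < mu_plus lam"
  using mu_plus_add_mu_minus[of lam] mu_minus_nonpos[of lam] by simp

lemma mu_minus_power_ne_mu_plus_power:
  assumes "n \<ge> 1"
  shows "mu_minus lam ^ n \<noteq> mu_plus lam ^ n"
proof -
  have "mu_minus lam ^ n \<le> \<bar>mu_minus lam\<bar> ^ n"
    by (metis abs_ge_self power_abs)
  also have "\<dots> < mu_plus lam ^ n"
    using abs_mu_minus_less_mu_plus[of lam] assms by (intro power_strict_mono) auto
  finally show ?thesis
    by simp
qed

lemma norm_sq_tilings:
  "norm_sq lam (tilings L) = (mu_plus lam ^ (L + 1) - mu_minus lam ^ (L + 1)) / (mu_plus lam - mu_minus lam)"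
proof -
  have "norm_sq lam (tilings L) = dimer_sum ((cmod lam)\<^sup>2) (tilings L)"
    using inj_on_content_jtilings[of 3 L] by (simp add: norm_sq_eq_dimer_sum finite_tilings jtilings_3)
  also have "\<dots> = (mu_plus lam ^ (L + 1) - mu_minus lam ^ (L + 1)) / (mu_plus lam - mu_minus lam)"
  proof (rule linear_recurrence_closed_form)
    show "mu_plus lam \<noteq> mu_minus lam"
      using abs_mu_minus_less_mu_plus[of lam] by auto
    show "dimer_sum ((cmod lam)\<^sup>2) (tilings 0) = 1"
      by (simp add: tilings_0 dimer_sum_def)
    show "dimer_sum ((cmod lam)\<^sup>2) (tilings 1) = mu_plus lam + mu_minus lam"
      by (simp add: One_nat_def tilings_1 dimer_sum_def num_dimers_def mu_plus_add_mu_minus)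
    show "dimer_sum ((cmod lam)\<^sup>2) (tilings (Suc (Suc n)))
        = (mu_plus lam + mu_minus lam) * dimer_sum ((cmod lam)\<^sup>2) (tilings (Suc n))
          - mu_plus lam * mu_minus lam * dimer_sum ((cmod lam)\<^sup>2) (tilings n)" for n
      by (simp add: dimer_sum_tilings_Suc_Suc mu_plus_add_mu_minus mu_plus_mult_mu_minus)
  qed
  finally show ?thesis .
qed

lemma binet_ratio:
  fixes p m :: "'a::field"
  assumes "p \<noteq> 0" "m ^ (n + 1) \<noteq> p ^ (n + 1)"
  shows "((p ^ n - m ^ n) / (p - m)) / ((p ^ (n + 1) - m ^ (n + 1)) / (p - m))
       = (1 / p) * ((1 - (m / p) ^ n) / (1 - (m / p) ^ (n + 1)))"
proof -
  obtain a b where ab: "p ^ n = a" "m ^ n = b"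
    by simp
  have "p \<noteq> m" "a \<noteq> 0" "p * a - m * b \<noteq> 0"
    using assms ab by auto
  then have "((p ^ n - m ^ n) / (p - m)) / ((p ^ (n + 1) - m ^ (n + 1)) / (p - m))
      = (a - b) / (p * a - m * b)"
    by (simp add: ab)
  also have "\<dots> = (1 / p) * ((1 - (m / p) ^ n) / (1 - (m / p) ^ (n + 1)))"
    using assms(1) \<open>a \<noteq> 0\<close> \<open>p * a - m * b \<noteq> 0\<close> by (simp add: ab power_divide field_simps)
  finally show ?thesis .
qed

theorem lemma2p13:
  fixes lam :: complex
  shows "(\<forall>n j. n \<ge> 1 \<longrightarrow> j \<in> {1, 2, 3} \<longrightarrow>
            phi_norm_sq lam j n
              = (mu_plus lam ^ (n + 1) - mu_minus lam ^ (n + 1)) / (mu_plus lam - mu_minus lam))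
      \<and> (let \<mu> = mu_minus lam / mu_plus lam in
           -1 < \<mu> \<and> \<mu> \<le> 0 \<and>
           (\<forall>n. n \<ge> 1 \<longrightarrow>
              norm_sq lam (tilings (n - 1)) / norm_sq lam (tilings n)
                = (1 / mu_plus lam) * ((1 - \<mu> ^ n) / (1 - \<mu> ^ (n + 1)))))"
proof -
  let ?p = "mu_plus lam" and ?m = "mu_minus lam"
  have ratio: "norm_sq lam (tilings (n - 1)) / norm_sq lam (tilings n)
      = (1 / ?p) * ((1 - (?m / ?p) ^ n) / (1 - (?m / ?p) ^ (n + 1)))" if "n \<ge> 1" for n
  proof -
    have "norm_sq lam (tilings (n - 1)) / norm_sq lam (tilings n)
        = ((?p ^ n - ?m ^ n) / (?p - ?m)) / ((?p ^ (n + 1) - ?m ^ (n + 1)) / (?p - ?m))"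
      using that by (simp add: norm_sq_tilings)
    also have "\<dots> = (1 / ?p) * ((1 - (?m / ?p) ^ n) / (1 - (?m / ?p) ^ (n + 1)))"
      using abs_mu_minus_less_mu_plus[of lam] mu_minus_power_ne_mu_plus_power[of "n + 1" lam]
      by (intro binet_ratio) auto
    finally show ?thesis .
  qed
  have "-1 < ?m / ?p" "?m / ?p \<le> 0"
    using abs_mu_minus_less_mu_plus[of lam] mu_minus_nonpos[of lam]
    by (simp_all add: field_simps divide_nonpos_pos)
  then show ?thesis
    using ratio by (simp add: Let_def phi_norm_sq_def norm_sq_jtilings norm_sq_tilings)
qed

end
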